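(* Under the standing assumptions with Gaussian signaling $x\sim\mathcal{CN}(0,1)$, so that $\hat\phi(\rho)=1/(1+\rho)$, and $\mathbf A\neq\mathbf 0$ in the limit (i.e. $\hat\gamma(1)<1$), the equation $\hat\phi(\rho)=\eta^{-1}(\rho)$ has a unique positive solution, namely $$\rho^*_{\rm Gau}=[\hat\gamma(1)]^{-1}-1.$$
   Context: Standing assumptions (LUIS): $M,N\to\infty$ with $\beta=N/M$ fixed; $\mathbf A\in\mathbb C^{M\times N}$ right-unitarily invariant with the empirical eigenvalue distribution of $\mathbf A^{\mathrm H}\mathbf A$ converging to a compactly supported limit, $\frac1N\mathrm{tr}(\mathbf A^{\mathrm H}\mathbf A)\to1$; normalized traces denote large-system limits; $snr>0$. $\hat\phi(\rho)=\mathrm E|x-\mathrm E[x\mid\sqrt\rho x+z]|^2$ with $z\sim\mathcal{CN}(0,1)$ independent of $x$. $\hat\gamma(v)=\frac1N\mathrm{tr}\{(snr\,\mathbf A^{\mathrm H}\mathbf A+v^{-1}\mathbf I)^{-1}\}$ for $v>0$ (strictly increasing, inverse $\hat\gamma^{-1}$); $\eta(v)=v^{-1}-[\hat\gamma^{-1}(v)]^{-1}$, with inverse $\eta^{-1}$. *)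

theory Defs
  imports "HOL-Probability.Probability"
begin

text \<open>The large-system limit of the empirical eigenvalue distribution of A^H A is modelled
  by a probability measure M on the reals; normalized traces become integrals against M.\<close>

definition gamma_hat :: "real measure \<Rightarrow> real \<Rightarrow> real \<Rightarrow> real" where
  "gamma_hat M snr v = (\<integral>lam. 1 / (snr * lam + 1 / v) \<partial>M)"

definition gamma_hat_inv :: "real measure \<Rightarrow> real \<Rightarrow> real \<Rightarrow> real" where
  "gamma_hat_inv M snr = the_inv_into {0<..} (gamma_hat M snr)"

definition eta :: "real measure \<Rightarrow> real \<Rightarrow> real \<Rightarrow> real" where
  "eta M snr v = 1 / v - 1 / gamma_hat_inv M snr v"

text \<open>Domain of eta = domain of the inverse of gamma_hat = range of gamma_hat on v > 0.\<close>
definition eta_dom :: "real measure \<Rightarrow> real \<Rightarrow> real set" where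
  "eta_dom M snr = gamma_hat M snr ` {0<..}"

definition eta_inv :: "real measure \<Rightarrow> real \<Rightarrow> real \<Rightarrow> real" where
  "eta_inv M snr = the_inv_into (eta_dom M snr) (eta M snr)"

definition phi_gau :: "real \<Rightarrow> real" where
  "phi_gau rho = 1 / (1 + rho)"

end

theory Submission
  imports Defs
begin

text \<open>Since \<open>\<hat>\<gamma>\<close> is injective, \<open>\<eta>(\<hat>\<gamma>(w)) = 1/\<hat>\<gamma>(w) - 1/w\<close> for every \<open>w > 0\<close>.
  Every candidate \<open>\<rho>\<close> is \<open>\<eta>(u)\<close> with \<open>u = \<hat>\<gamma>(w)\<close>, and \<open>\<eta>\<^sup>-\<^sup>1(\<rho>) = u\<close>, so the fixed-point
  equation \<open>1/(1 + \<rho>) = u\<close> reads \<open>1 + 1/u - 1/w = 1/u\<close>, i.e. \<open>w = 1\<close>. Hence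
  \<open>\<rho> = 1/\<hat>\<gamma>(1) - 1\<close>, which is positive because \<open>0 < \<hat>\<gamma>(1) < 1\<close>.\<close>

lemma gamma_hat_integrand_pos:
  fixes snr v lam :: real
  assumes "snr > 0" "v > 0" "lam \<ge> 0"
  shows "0 < 1 / (snr * lam + 1 / v)"
  using assms by (intro divide_pos_pos add_nonneg_pos) auto

lemma integrable_gamma_hat_integrand:
  fixes M :: "real measure" and snr v :: real
  assumes "finite_measure M" "sets M = sets borel" "AE lam in M. lam \<ge> 0" "snr > 0" "v > 0"
  shows "integrable M (\<lambda>lam. 1 / (snr * lam + 1 / v))"
proof -
  interpret finite_measure M by fact
  have "(\<lambda>lam. 1 / (snr * lam + 1 / v)) \<in> borel_measurable borel" by measurable
  then have "(\<lambda>lam. 1 / (snr * lam + 1 / v)) \<in> borel_measurable M"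
    by (simp add: measurable_cong_sets[OF assms(2) refl])
  moreover have "AE lam in M. norm (1 / (snr * lam + 1 / v)) \<le> v"
    using assms(3)
  proof (rule eventually_mono)
    fix lam :: real assume "lam \<ge> 0"
    then have "0 < snr * lam + 1 / v" "1 / v \<le> snr * lam + 1 / v"
      using assms(4,5) by (auto intro: add_nonneg_pos)
    then have "1 / (snr * lam + 1 / v) \<le> 1 / (1 / v)"
      using assms(5) by (intro divide_left_mono) auto
    then show "norm (1 / (snr * lam + 1 / v)) \<le> v"
      using \<open>0 < snr * lam + 1 / v\<close> by simp
  qed
  ultimately show ?thesis by (intro integrable_const_bound) auto
qed

lemma gamma_hat_pos:
  fixes M :: "real measure" and snr v :: real
  assumes "prob_space M" "sets M = sets borel" "AE lam in M. lam \<ge> 0" "snr > 0" "v > 0"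
  shows "0 < gamma_hat M snr v"
proof -
  interpret prob_space M by fact
  have "(\<integral>lam. 0 \<partial>M) < (\<integral>lam. 1 / (snr * lam + 1 / v) \<partial>M)"
    using assms integrable_gamma_hat_integrand[OF finite_measure_axioms]
      gamma_hat_integrand_pos emeasure_space_1
    by (intro integral_less_AE_space) (auto elim!: eventually_mono)
  then show ?thesis unfolding gamma_hat_def by simp
qed

lemma strict_mono_on_gamma_hat:
  fixes M :: "real measure" and snr :: real
  assumes "prob_space M" "sets M = sets borel" "AE lam in M. lam \<ge> 0" "snr > 0"
  shows "strict_mono_on {0<..} (gamma_hat M snr)"
proof (rule strict_mono_onI)
  interpret prob_space M by fact
  fix v w :: real assume "v \<in> {0<..}" "w \<in> {0<..}" "v < w"
  then have vw: "0 < v" "0 < w" "1 / w < 1 / v" by (auto simp: frac_less2)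
  have "AE lam in M. 1 / (snr * lam + 1 / v) < 1 / (snr * lam + 1 / w)"
    using assms(3)
  proof (rule eventually_mono)
    fix lam :: real assume "lam \<ge> 0"
    then have "0 < snr * lam + 1 / w" using assms(4) vw by (intro add_nonneg_pos) auto
    then show "1 / (snr * lam + 1 / v) < 1 / (snr * lam + 1 / w)"
      using vw(3) by (intro frac_less2) auto
  qed
  then show "gamma_hat M snr v < gamma_hat M snr w"
    unfolding gamma_hat_def
    using assms vw integrable_gamma_hat_integrand[OF finite_measure_axioms] emeasure_space_1
    by (intro integral_less_AE_space) auto
qed

lemma gamma_hat_inv_gamma_hat:
  fixes M :: "real measure" and snr w :: real
  assumes "prob_space M" "sets M = sets borel" "AE lam in M. lam \<ge> 0" "snr > 0" "w > 0"
  shows "gamma_hat_inv M snr (gamma_hat M snr w) = w"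
  unfolding gamma_hat_inv_def
  using the_inv_into_f_f[OF strict_mono_on_imp_inj_on[OF strict_mono_on_gamma_hat[OF assms(1-4)]]]
    assms(5) by simp

lemma eta_gamma_hat:
  fixes M :: "real measure" and snr w :: real
  assumes "prob_space M" "sets M = sets borel" "AE lam in M. lam \<ge> 0" "snr > 0" "w > 0"
  shows "eta M snr (gamma_hat M snr w) = 1 / gamma_hat M snr w - 1 / w"
  unfolding eta_def using gamma_hat_inv_gamma_hat[OF assms] by simp

text \<open>The case \<open>1 + \<rho> = 0\<close> is excluded by \<open>u > 0\<close>, since there \<open>phi_gau \<rho> = 0\<close> by \<open>x / 0 = 0\<close>.\<close>
lemma phi_gau_eq_iff:
  fixes u w :: real
  assumes "u > 0" "w > 0"
  shows "phi_gau (1 / u - 1 / w) = u \<longleftrightarrow> w = 1"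
proof
  assume eq: "phi_gau (1 / u - 1 / w) = u"
  then have "1 + (1 / u - 1 / w) \<noteq> 0" using assms(1) unfolding phi_gau_def by auto
  with eq have "u * (1 + (1 / u - 1 / w)) = 1"
    unfolding phi_gau_def by (simp add: field_simps)
  then show "w = 1" using assms by (simp add: field_simps)
qed (use assms in \<open>simp add: phi_gau_def\<close>)

theorem lemma7:
  fixes M :: "real measure" and snr :: real and K :: "real set"
  assumes "prob_space M"
    and "sets M = sets borel"
    and "compact K" and "K \<subseteq> {0..}"
    and "AE lam in M. lam \<in> K"
    and "(\<integral>lam. lam \<partial>M) = 1"
    and "snr > 0"
    and "inj_on (eta M snr) (eta_dom M snr)"
    and "gamma_hat M snr 1 < 1"
  shows "{rho. rho > 0 \<and> rho \<in> eta M snr ` eta_dom M snr \<and> phi_gau rho = eta_inv M snr rho}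
           = {1 / gamma_hat M snr 1 - 1}"
proof -
  have nonneg: "AE lam in M. lam \<ge> 0"
    using assms(5) by (rule eventually_mono) (use assms(4) in auto)
  note gamma_pos = gamma_hat_pos[OF assms(1,2) nonneg assms(7)]
  note eta_gamma = eta_gamma_hat[OF assms(1,2) nonneg assms(7)]
  have eta_inv_eta: "eta_inv M snr (eta M snr u) = u" if "u \<in> eta_dom M snr" for u
    unfolding eta_inv_def using the_inv_into_f_f[OF assms(8) that] .
  have solution_iff: "phi_gau (eta M snr (gamma_hat M snr w))
      = eta_inv M snr (eta M snr (gamma_hat M snr w)) \<longleftrightarrow> w = 1" if "w > 0" for w
    using that eta_gamma eta_inv_eta[of "gamma_hat M snr w"] gamma_pos phi_gau_eq_iff
    unfolding eta_dom_def by simp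
  have rho_pos: "0 < 1 / gamma_hat M snr 1 - 1"
    using gamma_pos[of 1] assms(9) by (simp add: field_simps)
  show ?thesis
  proof (intro set_eqI iffI)
    fix rho
    assume "rho \<in> {rho. rho > 0 \<and> rho \<in> eta M snr ` eta_dom M snr \<and> phi_gau rho = eta_inv M snr rho}"
    then obtain w where "w > 0" "rho = eta M snr (gamma_hat M snr w)"
        "phi_gau rho = eta_inv M snr rho"
      unfolding eta_dom_def by auto
    with solution_iff eta_gamma show "rho \<in> {1 / gamma_hat M snr 1 - 1}" by auto
  next
    fix rho assume "rho \<in> {1 / gamma_hat M snr 1 - 1}"
    then have rho: "rho = eta M snr (gamma_hat M snr 1)" using eta_gamma[of 1] by simp
    then have "rho \<in> eta M snr ` eta_dom M snr" unfolding eta_dom_def by auto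
    with rho show "rho \<in> {rho. rho > 0 \<and> rho \<in> eta M snr ` eta_dom M snr \<and> phi_gau rho = eta_inv M snr rho}"
      using solution_iff[of 1] rho_pos eta_gamma[of 1] by auto
  qed
qed

end
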